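(* Consider an $M/G/1$ queue, empty at time $0$, in which customers arrive at the times of a Poisson process of rate $\lambda>0$, the service times are i.i.d., independent of the arrival process, with finite mean $\mu$ and finite third moment, the traffic intensity $\rho=\lambda\mu$ satisfies $\rho<1$, and the single server is never idle while customers are present. Number customers $1,2,\dots$ in order of arrival, let $D_i$ be the departure time of customer $i$, and for $n\in\mathbb{N}$ let $\Pi_n\in\mathbb{S}_n$ be given by $\Pi_n(i)=\#\{j\le n: D_j\le D_i\}$, $i\in[n]$. Let $C_\infty(u,v)=\min\{u,v\}$, $u,v\in[0,1]$. Then almost surely $\Pi_n\to C_\infty$ in the pattern frequency topology, i.e. almost surely $\lim_{n\to\infty}t(\sigma,\Pi_n)=t(\sigma,C_\infty)$ for every $\sigma\in\mathbb{S}$.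
   Context: $\mathbb{S}_n$ is the set of permutations of $[n]$, $\mathbb{S}=\bigsqcup_n\mathbb{S}_n$. For $\sigma\in\mathbb{S}_k$, $\pi\in\mathbb{S}_n$, $k\le n$, the pattern frequency $t(\sigma,\pi)$ is the fraction of the $\binom nk$ subsets $\{i_1<\dots<i_k\}\subset[n]$ with $\sigma(j)<\sigma(m)\Leftrightarrow\pi(i_j)<\pi(i_m)$ for all $j,m\in[k]$. For a copula $C$ (distribution function on $[0,1]^2$ with uniform marginals) and $\sigma\in\mathbb{S}_k$, $t(\sigma,C)$ is the probability that i.i.d. $(X_1,Y_1),\dots,(X_k,Y_k)$ with distribution function $C$ have associated permutation $\pi_Y\circ\pi_X^{-1}=\sigma$, where $\pi_X(i)=\#\{j:X_j\le X_i\}$, $\pi_Y(i)=\#\{j:Y_j\le Y_i\}$. (For $C_\infty$ this equals $1$ if $\sigma$ is the identity and $0$ otherwise.) *)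

theory Defs
  imports "HOL-Probability.Probability" "HOL-Combinatorics.Permutations"
begin

definition pattern_freq :: "nat \<Rightarrow> (nat \<Rightarrow> nat) \<Rightarrow> nat \<Rightarrow> (nat \<Rightarrow> nat) \<Rightarrow> real" where
  "pattern_freq k \<sigma> n \<pi> =
     real (card {I. I \<subseteq> {1..n} \<and> card I = k \<and>
        (let s = sorted_list_of_set I in
          \<forall>j\<in>{1..k}. \<forall>m\<in>{1..k}.
             (\<sigma> j < \<sigma> m \<longleftrightarrow> \<pi> (s ! (j - 1)) < \<pi> (s ! (m - 1))))})
     / real (n choose k)"

text \<open>t(sigma, C_infinity) for C_infinity(u,v) = min u v: 1 for the identity, 0 otherwise.\<close>
definition pattern_freq_Cinf :: "nat \<Rightarrow> (nat \<Rightarrow> nat) \<Rightarrow> real" where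
  "pattern_freq_Cinf k \<sigma> = (if \<forall>i\<in>{1..k}. \<sigma> i = i then 1 else 0)"

definition present :: "(nat \<Rightarrow> real) \<Rightarrow> (nat \<Rightarrow> real) \<Rightarrow> real \<Rightarrow> nat set" where
  "present A D t = {i. 1 \<le> i \<and> A i \<le> t \<and> t < D i}"

text \<open>The server splits its unit capacity among present customers via
  rates r i t (covering FIFO, LIFO, preemptive disciplines, processor sharing, ...); it is
  never idle while customers are present, and a customer departs exactly when its received
  service reaches its service requirement.\<close>
definition work_conserving_schedule ::
  "(nat \<Rightarrow> real) \<Rightarrow> (nat \<Rightarrow> real) \<Rightarrow> (nat \<Rightarrow> real) \<Rightarrow> bool" where
  "work_conserving_schedule A S D \<longleftrightarrow>
     (\<exists>r :: nat \<Rightarrow> real \<Rightarrow> real.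
        (\<forall>i\<ge>1. A i \<le> D i) \<and>
        (\<forall>i\<ge>1. \<forall>t. 0 \<le> r i t \<and> (r i t \<noteq> 0 \<longrightarrow> A i \<le> t \<and> t < D i)) \<and>
        (\<forall>i\<ge>1. (r i has_integral S i) {A i..D i}) \<and>
        (\<forall>i\<ge>1. \<forall>t. A i \<le> t \<and> t < D i \<longrightarrow> integral {A i..t} (r i) < S i) \<and>
        (\<forall>t. present A D t \<noteq> {} \<longrightarrow>
              finite (present A D t) \<and> (\<Sum>i\<in>present A D t. r i t) = 1))"

definition departure_perm :: "(nat \<Rightarrow> real) \<Rightarrow> nat \<Rightarrow> nat \<Rightarrow> nat" where
  "departure_perm D n i = card {j\<in>{1..n}. D j \<le> D i}"

end

theory Submission
  imports Defs "HOL-Library.Discrete_Functions"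
begin

(* If customers i < j are inverted in the departure order, then j arrives before i departs.
   A work-conserving server is then continuously busy from the arrival time A p of some
   customer p <= i until A j, and in that interval it serves only customers p, ..., j - 1;
   hence A j - A p <= S p + ... + S (j - 1). By the strong law of large numbers
   A n / n -> 1 / lam and (S 1 + ... + S n) / n -> mu < 1 / lam, so this is only possible
   if j - p = o(n). Thus almost surely every inversion of Pi_n has length o(n). A k-subset
   of [n] containing an inversion is determined by the left end and length of the inversion
   and k - 2 further points, so such subsets make up a fraction O(k^2 o(n) / n) -> 0 of all
   k-subsets: t(id, Pi_n) -> 1 and t(sigma, Pi_n) -> 0 for every other sigma.
   Pairwise independence and finite variances suffice for the strong law: Chebyshev's
   inequality and Borel-Cantelli give convergence along the squares, and monotonicity of
   the partial sums of nonnegative terms fills the gaps. *)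

section \<open>Permutations with short inversions\<close>

lemma permutes_strict_mono_on_eq_id:
  fixes \<sigma> :: "nat \<Rightarrow> nat"
  assumes perm: "\<sigma> permutes {1..k}" and mono: "strict_mono_on {1..k} \<sigma>"
  shows "\<sigma> i = i"
proof (cases "i \<in> {1..k}")
  case True
  let ?xs = "[1..<Suc k]"
  have "sorted_wrt (<) (map \<sigma> ?xs)"
    unfolding sorted_wrt_map
    by (rule sorted_wrt_mono_rel[OF _ sorted_wrt_upt]) (use mono in \<open>auto simp: strict_mono_on_def\<close>)
  moreover have "set (map \<sigma> ?xs) = set ?xs"
    by (simp only: set_map set_upt atLeastLessThanSuc_atLeastAtMost permutes_image[OF perm])
  ultimately have "map \<sigma> ?xs = ?xs"
    using strict_sorted_equal[OF sorted_wrt_upt] by blast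
  then have "\<forall>x\<in>set ?xs. \<sigma> x = id x"
    using map_eq_conv[of \<sigma> ?xs id] by (metis list.map_id)
  then show ?thesis
    using True unfolding set_upt atLeastLessThanSuc_atLeastAtMost by simp
next
  case False
  then show ?thesis using permutes_not_in[OF perm] by simp
qed

definition occurrence :: "nat \<Rightarrow> (nat \<Rightarrow> nat) \<Rightarrow> (nat \<Rightarrow> nat) \<Rightarrow> nat set \<Rightarrow> bool" where
  "occurrence k \<sigma> \<pi> I \<longleftrightarrow> (let s = sorted_list_of_set I in
     \<forall>j\<in>{1..k}. \<forall>m\<in>{1..k}. (\<sigma> j < \<sigma> m \<longleftrightarrow> \<pi> (s ! (j - 1)) < \<pi> (s ! (m - 1))))"

definition inversion_subsets :: "nat \<Rightarrow> nat \<Rightarrow> (nat \<Rightarrow> nat) \<Rightarrow> nat set set" where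
  "inversion_subsets n k \<pi> =
     {I. I \<subseteq> {1..n} \<and> card I = k \<and> (\<exists>a\<in>I. \<exists>b\<in>I. a < b \<and> \<pi> b \<le> \<pi> a)}"

lemma pattern_freq_eq_card_occurrences:
  "pattern_freq k \<sigma> n \<pi> =
     real (card {I. I \<subseteq> {1..n} \<and> card I = k \<and> occurrence k \<sigma> \<pi> I}) / real (n choose k)"
  unfolding pattern_freq_def occurrence_def ..

lemma card_subsets_of_card: "card {I. I \<subseteq> {1..n} \<and> card I = k} = (n::nat) choose k"
  using n_subsets[of "{1..n}" k] by simp

lemma finite_subsets_of_card: "finite {I. I \<subseteq> {1..n::nat} \<and> card I = k}"
  by (rule finite_subset[of _ "Pow {1..n}"]) auto

lemma sorted_list_of_set_nth_less_iff:
  assumes "finite I" "i < card I" "j < card I"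
  shows "sorted_list_of_set I ! i < sorted_list_of_set I ! j \<longleftrightarrow> i < j"
  using assms sorted_wrt_nth_less[OF strict_sorted_list_of_set[of I], of i j]
    sorted_wrt_nth_less[OF strict_sorted_list_of_set[of I], of j i]
  by (metis length_sorted_list_of_set not_less_iff_gr_or_eq)

lemma occurrence_iff_strict_mono_on:
  fixes \<pi> :: "nat \<Rightarrow> nat"
  assumes "finite I" "card I = k" and incr: "strict_mono_on I \<pi>"
  shows "occurrence k \<sigma> \<pi> I \<longleftrightarrow> strict_mono_on {1..k} \<sigma>"
proof -
  let ?s = "sorted_list_of_set I"
  have "\<pi> (?s ! (j - 1)) < \<pi> (?s ! (m - 1)) \<longleftrightarrow> j < m" if "j \<in> {1..k}" "m \<in> {1..k}" for j m
  proof -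
    have "length ?s = k" using assms by simp
    then have "?s ! (j - 1) \<in> I" "?s ! (m - 1) \<in> I"
      using that assms(1) nth_mem[of "j - 1" ?s] nth_mem[of "m - 1" ?s] by auto
    then have "\<pi> (?s ! (j - 1)) < \<pi> (?s ! (m - 1)) \<longleftrightarrow> ?s ! (j - 1) < ?s ! (m - 1)"
      by (rule strict_mono_on_less[OF incr])
    also have "\<dots> \<longleftrightarrow> j < m"
      using that assms by (subst sorted_list_of_set_nth_less_iff) auto
    finally show ?thesis .
  qed
  then have "occurrence k \<sigma> \<pi> I \<longleftrightarrow> (\<forall>j\<in>{1..k}. \<forall>m\<in>{1..k}. \<sigma> j < \<sigma> m \<longleftrightarrow> j < m)"
    unfolding occurrence_def Let_def by simp
  also have "\<dots> \<longleftrightarrow> strict_mono_on {1..k} \<sigma>"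
    using strict_mono_on_less[of "{1..k}" \<sigma>] by (auto intro: strict_mono_onI)
  finally show ?thesis .
qed

lemma not_occurrence_if_inversion:
  fixes \<pi> :: "nat \<Rightarrow> nat"
  assumes "finite I" "card I = k" "a \<in> I" "b \<in> I" "a < b" "\<pi> b \<le> \<pi> a"
    and "strict_mono_on {1..k} \<sigma>"
  shows "\<not> occurrence k \<sigma> \<pi> I"
proof -
  let ?s = "sorted_list_of_set I"
  obtain i j where "i < k" "?s ! i = a" "j < k" "?s ! j = b"
    using assms by (metis in_set_conv_nth length_sorted_list_of_set set_sorted_list_of_set)
  moreover from this have "i < j"
    using assms sorted_list_of_set_nth_less_iff by metis
  ultimately have "Suc i \<in> {1..k}" "Suc j \<in> {1..k}" "\<sigma> (Suc i) < \<sigma> (Suc j)"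
    "\<not> \<pi> (?s ! (Suc i - 1)) < \<pi> (?s ! (Suc j - 1))"
    using assms by (auto intro: strict_mono_onD)
  then show ?thesis unfolding occurrence_def Let_def by blast
qed

lemma occurrences_eq_if_strict_mono_on:
  assumes "strict_mono_on {1..k} \<sigma>"
  shows "{I. I \<subseteq> {1..n} \<and> card I = k \<and> occurrence k \<sigma> \<pi> I} =
    {I. I \<subseteq> {1..n} \<and> card I = k} - inversion_subsets n k \<pi>"
proof (intro set_eqI iffI)
  fix I assume I: "I \<in> {I. I \<subseteq> {1..n} \<and> card I = k \<and> occurrence k \<sigma> \<pi> I}"
  then have "finite I" using finite_subset by blast
  then show "I \<in> {I. I \<subseteq> {1..n} \<and> card I = k} - inversion_subsets n k \<pi>"
    using I not_occurrence_if_inversion[OF _ _ _ _ _ _ assms] by (auto simp: inversion_subsets_def)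
next
  fix I assume I: "I \<in> {I. I \<subseteq> {1..n} \<and> card I = k} - inversion_subsets n k \<pi>"
  then have "finite I" using finite_subset by blast
  moreover have "strict_mono_on I \<pi>"
    using I by (auto simp: inversion_subsets_def not_le intro: strict_mono_onI)
  ultimately show "I \<in> {I. I \<subseteq> {1..n} \<and> card I = k \<and> occurrence k \<sigma> \<pi> I}"
    using I assms occurrence_iff_strict_mono_on by blast
qed

lemma occurrences_subset_if_not_strict_mono_on:
  assumes "\<not> strict_mono_on {1..k} \<sigma>"
  shows "{I. I \<subseteq> {1..n} \<and> card I = k \<and> occurrence k \<sigma> \<pi> I} \<subseteq> inversion_subsets n k \<pi>"
proof
  fix I assume I: "I \<in> {I. I \<subseteq> {1..n} \<and> card I = k \<and> occurrence k \<sigma> \<pi> I}"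
  then have "finite I" using finite_subset by blast
  then have "\<not> strict_mono_on I \<pi>"
    using I assms occurrence_iff_strict_mono_on by blast
  then show "I \<in> inversion_subsets n k \<pi>"
    using I by (auto simp: inversion_subsets_def strict_mono_on_def not_less)
qed

lemma pattern_freq_eq_if_strict_mono_on:
  assumes "strict_mono_on {1..k} \<sigma>" "k \<le> n"
  shows "pattern_freq k \<sigma> n \<pi> = 1 - real (card (inversion_subsets n k \<pi>)) / real (n choose k)"
proof -
  have sub: "inversion_subsets n k \<pi> \<subseteq> {I. I \<subseteq> {1..n} \<and> card I = k}"
    by (auto simp: inversion_subsets_def)
  have "card {I. I \<subseteq> {1..n} \<and> card I = k \<and> occurrence k \<sigma> \<pi> I} =
      (n choose k) - card (inversion_subsets n k \<pi>)"
    unfolding occurrences_eq_if_strict_mono_on[OF assms(1)] card_subsets_of_card[symmetric]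
    using finite_subset[OF sub finite_subsets_of_card] sub by (rule card_Diff_subset)
  moreover have "card (inversion_subsets n k \<pi>) \<le> n choose k"
    unfolding card_subsets_of_card[symmetric] using finite_subsets_of_card sub by (rule card_mono)
  ultimately show ?thesis
    using assms(2) by (simp add: pattern_freq_eq_card_occurrences of_nat_diff diff_divide_distrib)
qed

lemma pattern_freq_le_if_not_strict_mono_on:
  assumes "\<not> strict_mono_on {1..k} \<sigma>"
  shows "pattern_freq k \<sigma> n \<pi> \<le> real (card (inversion_subsets n k \<pi>)) / real (n choose k)"
proof -
  have "finite (inversion_subsets n k \<pi>)"
    by (rule finite_subset[OF _ finite_subsets_of_card[of n k]]) (auto simp: inversion_subsets_def)
  then have "card {I. I \<subseteq> {1..n} \<and> card I = k \<and> occurrence k \<sigma> \<pi> I} \<le>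
      card (inversion_subsets n k \<pi>)"
    using occurrences_subset_if_not_strict_mono_on[OF assms] by (rule card_mono)
  then show ?thesis
    unfolding pattern_freq_eq_card_occurrences by (simp add: divide_right_mono)
qed

lemma card_subsets_containing_two_le:
  assumes "a \<noteq> b"
  shows "card {I. I \<subseteq> {1..n} \<and> card I = k \<and> a \<in> I \<and> b \<in> I} \<le> (n - 2) choose (k - 2)"
proof (cases "a \<in> {1..n} \<and> b \<in> {1..n}")
  case True
  let ?F = "{I. I \<subseteq> {1..n} \<and> card I = k \<and> a \<in> I \<and> b \<in> I}"
  let ?T = "{J. J \<subseteq> {1..n} - {a, b} \<and> card J = k - 2}"
  have "inj_on (\<lambda>I. I - {a, b}) ?F"
    by (rule inj_onI) blast
  moreover have "(\<lambda>I. I - {a, b}) ` ?F \<subseteq> ?T"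
    using assms by (auto simp: card_Diff_subset finite_subset)
  moreover have "finite ?T"
    by (rule finite_subset[of _ "Pow {1..n}"]) auto
  ultimately have "card ?F \<le> card ?T"
    by (rule card_inj_on_le)
  also have "card ?T = (n - 2) choose (k - 2)"
    using True assms by (subst n_subsets) (auto simp: card_Diff_subset numeral_2_eq_2)
  finally show ?thesis .
next
  case False
  then have "{I. I \<subseteq> {1..n} \<and> card I = k \<and> a \<in> I \<and> b \<in> I} = {}" by blast
  then show ?thesis by (simp only: card.empty zero_le)
qed

lemma card_inversion_subsets_le:
  fixes \<pi> :: "nat \<Rightarrow> nat"
  assumes gaps: "\<And>a b. 1 \<le> a \<Longrightarrow> a < b \<Longrightarrow> b \<le> n \<Longrightarrow> \<pi> b \<le> \<pi> a \<Longrightarrow> b - a < w"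
  shows "card (inversion_subsets n k \<pi>) \<le> n * w * ((n - 2) choose (k - 2))"
proof -
  let ?F = "\<lambda>(a, d). {I. I \<subseteq> {1..n} \<and> card I = k \<and> a \<in> I \<and> a + d \<in> I}"
  have "inversion_subsets n k \<pi> \<subseteq> (\<Union>p\<in>{1..n} \<times> {1..<w}. ?F p)"
  proof
    fix I assume "I \<in> inversion_subsets n k \<pi>"
    then obtain a b where "I \<subseteq> {1..n}" "card I = k" "a \<in> I" "b \<in> I" "a < b" "\<pi> b \<le> \<pi> a"
      by (auto simp: inversion_subsets_def)
    moreover from this have "b - a < w" using gaps by (meson atLeastAtMost_iff subsetD)
    ultimately show "I \<in> (\<Union>p\<in>{1..n} \<times> {1..<w}. ?F p)"
      by (intro UN_I[of "(a, b - a)"]) auto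
  qed
  then have "card (inversion_subsets n k \<pi>) \<le> card (\<Union>p\<in>{1..n} \<times> {1..<w}. ?F p)"
    by (intro card_mono) (auto intro: finite_subset[OF _ finite_subsets_of_card[of n k]])
  also have "\<dots> \<le> (\<Sum>p\<in>{1..n} \<times> {1..<w}. card (?F p))"
    by (rule card_UN_le) simp
  also have "\<dots> \<le> (\<Sum>p\<in>{1..n} \<times> {1..<w}. (n - 2) choose (k - 2))"
    by (intro sum_mono) (clarify, rule card_subsets_containing_two_le, simp)
  also have "\<dots> = n * (w - 1) * ((n - 2) choose (k - 2))"
    by (simp add: card_cartesian_product)
  also have "\<dots> \<le> n * w * ((n - 2) choose (k - 2))"
    by (intro mult_le_mono) auto
  finally show ?thesis .
qed

lemma choose_mult_falling2:
  assumes "2 \<le> k"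
  shows "(n choose k) * (k * (k - 1)) = n * (n - 1) * ((n - 2) choose (k - 2))"
proof -
  have "(n choose k) * (k * (k - 1)) = (k - 1) * (k * (n choose k))"
    by (simp add: ac_simps)
  also have "\<dots> = n * ((k - 1) * ((n - 1) choose (k - 1)))"
    using assms by (simp add: times_binomial_minus1_eq ac_simps)
  also have "(k - 1) * ((n - 1) choose (k - 1)) = (n - 1) * ((n - 2) choose (k - 2))"
    using assms times_binomial_minus1_eq[of "k - 1" "n - 1"] by (simp add: numeral_2_eq_2)
  finally show ?thesis by (simp add: ac_simps)
qed

lemma inversion_subsets_ratio_le:
  fixes \<pi> :: "nat \<Rightarrow> nat"
  assumes gaps: "\<And>a b. 1 \<le> a \<Longrightarrow> a < b \<Longrightarrow> b \<le> n \<Longrightarrow> \<pi> b \<le> \<pi> a \<Longrightarrow> b - a < w"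
    and "2 \<le> k" "k \<le> n"
  shows "real (card (inversion_subsets n k \<pi>)) / real (n choose k) \<le> real k ^ 2 * real w / real n"
proof -
  have pos: "real (n choose k) > 0" "real n - 1 > 0" using assms by auto
  have "real (card (inversion_subsets n k \<pi>)) * (real n - 1) \<le>
      real n * real w * real ((n - 2) choose (k - 2)) * (real n - 1)"
    using card_inversion_subsets_le[OF gaps] pos
    by (intro mult_right_mono) (auto simp flip: of_nat_mult)
  also have "\<dots> = real w * (real n * (real n - 1) * real ((n - 2) choose (k - 2)))"
    by (simp add: algebra_simps)
  also have "real n * (real n - 1) * real ((n - 2) choose (k - 2)) =
      real (n choose k) * (real k * (real k - 1))"
    using arg_cong[OF choose_mult_falling2[OF assms(2), of n], of real] assms
    by (simp add: of_nat_diff)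
  finally have "real (card (inversion_subsets n k \<pi>)) / real (n choose k) \<le>
      real w * real k * ((real k - 1) / (real n - 1))"
    using pos by (simp add: divide_simps mult_ac)
  also have "\<dots> \<le> real w * real k * (real k / real n)"
  proof -
    have "(real k - 1) * real n \<le> real k * (real n - 1)"
      using assms by (simp add: algebra_simps)
    then have "(real k - 1) / (real n - 1) \<le> real k / real n"
      using pos assms by (simp add: divide_simps)
    then show ?thesis by (intro mult_left_mono) simp_all
  qed
  also have "\<dots> = real k ^ 2 * real w / real n"
    by (simp add: power2_eq_square mult_ac)
  finally show ?thesis .
qed

lemma inversion_subsets_eq_empty:
  assumes "k < 2"
  shows "inversion_subsets n k \<pi> = {}"
proof -
  have False if "I \<subseteq> {1..n}" "card I = k" "a \<in> I" "b \<in> I" "a < b" for I a b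
  proof -
    have "card {a, b} \<le> card I"
      using that by (intro card_mono) (auto intro: finite_subset)
    then show False using that assms by simp
  qed
  then show ?thesis unfolding inversion_subsets_def by blast
qed

definition inversions_sublinear :: "(nat \<Rightarrow> nat \<Rightarrow> nat) \<Rightarrow> bool" where
  "inversions_sublinear \<pi> \<longleftrightarrow> (\<forall>\<epsilon>>0. \<forall>\<^sub>F n in sequentially. \<forall>a b.
     1 \<le> a \<longrightarrow> a < b \<longrightarrow> b \<le> n \<longrightarrow> \<pi> n b \<le> \<pi> n a \<longrightarrow> real (b - a) < \<epsilon> * real n)"

lemma inversion_subsets_ratio_tendsto_0:
  assumes "inversions_sublinear \<pi>"
  shows "(\<lambda>n. real (card (inversion_subsets n k (\<pi> n))) / real (n choose k)) \<longlonglongrightarrow> 0"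
proof (cases "k < 2")
  case True
  then show ?thesis by (simp add: inversion_subsets_eq_empty)
next
  case False
  show ?thesis
  proof (rule tendsto_iff[THEN iffD2], intro allI impI)
    fix e :: real assume "e > 0"
    define \<epsilon> where "\<epsilon> = e / (2 * real k ^ 2)"
    have "\<epsilon> > 0" "real k ^ 2 * \<epsilon> = e / 2"
      using \<open>e > 0\<close> False by (simp_all add: \<epsilon>_def)
    have "\<forall>\<^sub>F n in sequentially. real k ^ 2 / real n < e / 2"
      using \<open>e > 0\<close> by (intro order_tendstoD(2)[OF lim_const_over_n]) simp
    moreover have "\<forall>\<^sub>F n in sequentially. \<forall>a b. 1 \<le> a \<longrightarrow> a < b \<longrightarrow> b \<le> n \<longrightarrow>
        \<pi> n b \<le> \<pi> n a \<longrightarrow> real (b - a) < \<epsilon> * real n"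
      using assms \<open>\<epsilon> > 0\<close> unfolding inversions_sublinear_def by blast
    ultimately show "\<forall>\<^sub>F n in sequentially.
        dist (real (card (inversion_subsets n k (\<pi> n))) / real (n choose k)) 0 < e"
      using eventually_ge_at_top[of "max k 1"]
    proof eventually_elim
      case (elim n)
      define w where "w = nat \<lceil>\<epsilon> * real n\<rceil>"
      have "b - a < w" if "1 \<le> a" "a < b" "b \<le> n" "\<pi> n b \<le> \<pi> n a" for a b
      proof -
        have "of_int (int (b - a)) < \<epsilon> * real n" using elim(2) that by simp
        then show ?thesis unfolding w_def by (simp add: zless_nat_eq_int_zless less_ceiling_iff)
      qed
      then have "real (card (inversion_subsets n k (\<pi> n))) / real (n choose k) \<le>
          real k ^ 2 * real w / real n"
        using False elim(3) by (intro inversion_subsets_ratio_le) auto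
      also have "\<dots> \<le> real k ^ 2 * (\<epsilon> * real n + 1) / real n"
        unfolding w_def using \<open>\<epsilon> > 0\<close> by (intro divide_right_mono mult_left_mono) simp_all
      also have "\<dots> = e / 2 + real k ^ 2 / real n"
        using elim(3) \<open>real k ^ 2 * \<epsilon> = e / 2\<close> by (simp add: field_simps)
      finally have "real (card (inversion_subsets n k (\<pi> n))) / real (n choose k) \<le>
          e / 2 + real k ^ 2 / real n" .
      then show ?case
        using elim(1) by (simp only: dist_real_def diff_zero abs_of_nonneg of_nat_0_le_iff
          divide_nonneg_nonneg)
    qed
  qed
qed

lemma pattern_freq_Cinf_eq:
  assumes "\<sigma> permutes {1..k}"
  shows "pattern_freq_Cinf k \<sigma> = (if strict_mono_on {1..k} \<sigma> then 1 else 0)"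
  using permutes_strict_mono_on_eq_id[OF assms]
  by (auto simp: pattern_freq_Cinf_def intro: strict_mono_onI)

theorem pattern_freq_tendsto_Cinf:
  assumes "inversions_sublinear \<pi>" "\<sigma> permutes {1..k}"
  shows "(\<lambda>n. pattern_freq k \<sigma> n (\<pi> n)) \<longlonglongrightarrow> pattern_freq_Cinf k \<sigma>"
proof (cases "strict_mono_on {1..k} \<sigma>")
  case True
  have "(\<lambda>n. 1 - real (card (inversion_subsets n k (\<pi> n))) / real (n choose k)) \<longlonglongrightarrow> 1 - 0"
    by (intro tendsto_diff tendsto_const inversion_subsets_ratio_tendsto_0 assms(1))
  moreover have "\<forall>\<^sub>F n in sequentially.
      1 - real (card (inversion_subsets n k (\<pi> n))) / real (n choose k) = pattern_freq k \<sigma> n (\<pi> n)"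
    using eventually_ge_at_top[of k]
    by eventually_elim (simp add: pattern_freq_eq_if_strict_mono_on[OF True])
  ultimately show ?thesis
    using True by (simp add: pattern_freq_Cinf_eq[OF assms(2)] Lim_transform_eventually)
next
  case False
  have "(\<lambda>n. pattern_freq k \<sigma> n (\<pi> n)) \<longlonglongrightarrow> 0"
  proof (rule tendsto_sandwich[OF _ _ tendsto_const inversion_subsets_ratio_tendsto_0[OF assms(1)]])
    show "\<forall>\<^sub>F n in sequentially. 0 \<le> pattern_freq k \<sigma> n (\<pi> n)"
      by (simp add: pattern_freq_def)
    show "\<forall>\<^sub>F n in sequentially. pattern_freq k \<sigma> n (\<pi> n) \<le>
        real (card (inversion_subsets n k (\<pi> n))) / real (n choose k)"
      by (simp add: pattern_freq_le_if_not_strict_mono_on[OF False])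
  qed
  then show ?thesis
    using False by (simp add: pattern_freq_Cinf_eq[OF assms(2)])
qed

section \<open>Busy periods of a work-conserving server\<close>

lemma service_integral_le:
  fixes r :: "real \<Rightarrow> real"
  assumes service: "(r has_integral s) {a..d}"
    and support: "\<And>t. r t \<noteq> 0 \<Longrightarrow> a \<le> t \<and> t < d"
    and nonneg: "\<And>t. 0 \<le> r t"
  shows "r integrable_on {u..v}" "integral {u..v} r \<le> s"
proof -
  let ?T = "{min u a..max v d}"
  have "(r has_integral s) ?T"
    by (rule has_integral_on_superset[OF service]) (use support in \<open>force+\<close>)
  then have int_T: "r integrable_on ?T" and "integral ?T r = s"
    by (auto simp: has_integral_integrable integral_unique)
  show int_uv: "r integrable_on {u..v}"
    by (cases "u \<le> v") (auto intro!: integrable_on_subinterval[OF int_T])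
  have "integral {u..v} r \<le> integral ?T r"
  proof (cases "u \<le> v")
    case True
    then show ?thesis
      by (intro integral_subset_le int_uv int_T) (auto simp: nonneg)
  next
    case False
    then show ?thesis
      using integral_nonneg[OF int_T] nonneg by simp
  qed
  then show "integral {u..v} r \<le> s"
    using \<open>integral ?T r = s\<close> by simp
qed

lemma busy_interval_le_workload:
  fixes A S D :: "nat \<Rightarrow> real"
  assumes ws: "work_conserving_schedule A S D"
    and L: "finite L" "\<And>l. l \<in> L \<Longrightarrow> 1 \<le> l" and "u \<le> v"
    and busy: "\<And>t. u \<le> t \<Longrightarrow> t < v \<Longrightarrow> present A D t \<noteq> {} \<and> present A D t \<subseteq> L"
  shows "v - u \<le> (\<Sum>l\<in>L. S l)"
proof -
  obtain r :: "nat \<Rightarrow> real \<Rightarrow> real" where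
    rate: "\<forall>i\<ge>1. \<forall>t. 0 \<le> r i t \<and> (r i t \<noteq> 0 \<longrightarrow> A i \<le> t \<and> t < D i)" and
    service: "\<forall>i\<ge>1. (r i has_integral S i) {A i..D i}" and
    capacity: "\<forall>t. present A D t \<noteq> {} \<longrightarrow>
      finite (present A D t) \<and> (\<Sum>i\<in>present A D t. r i t) = 1"
    using ws unfolding work_conserving_schedule_def by blast
  have full: "(\<Sum>l\<in>L. r l t) = 1" if "u \<le> t" "t < v" for t
  proof -
    have "(\<Sum>l\<in>L. r l t) = (\<Sum>l\<in>present A D t. r l t)"
      using busy[OF that] rate L by (intro sum.mono_neutral_right) (auto simp: present_def)
    also have "\<dots> = 1"
      using capacity busy[OF that] by blast
    finally show ?thesis .
  qed
  have received: "r l integrable_on {u..v}" "integral {u..v} (r l) \<le> S l" if "l \<in> L" for l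
    using service_integral_le[of "r l" "S l" "A l" "D l"] rate service L(2)[OF that] by auto
  have "v - u = integral {u..v} (\<lambda>t. \<Sum>l\<in>L. r l t)"
  proof -
    have "integral {u..v} (\<lambda>t. \<Sum>l\<in>L. r l t) = integral {u..v} (\<lambda>t. 1::real)"
      by (rule integral_spike[of "{v}"]) (auto simp: full)
    then show ?thesis using \<open>u \<le> v\<close> by simp
  qed
  also have "\<dots> = (\<Sum>l\<in>L. integral {u..v} (r l))"
    using received by (intro integral_sum L(1)) auto
  also have "\<dots> \<le> (\<Sum>l\<in>L. S l)"
    using received by (intro sum_mono) auto
  finally show ?thesis .
qed

lemma busy_period_start:
  fixes A D :: "nat \<Rightarrow> real"
  assumes mono: "\<And>l m. 1 \<le> l \<Longrightarrow> l \<le> m \<Longrightarrow> A l \<le> A m"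
    and "1 \<le> i" "i < j" "A j \<le> D i"
  obtains p where "1 \<le> p" "p \<le> i"
    "\<And>t. A p \<le> t \<Longrightarrow> t < A j \<Longrightarrow> present A D t \<noteq> {} \<and> present A D t \<subseteq> {p..<j}"
proof -
  \<comment> \<open>\<open>p\<close> is the first customer of the busy period in progress at time \<open>A i\<close>\<close>
  define P where "P = {p. 1 \<le> p \<and> p \<le> i \<and> (\<forall>t. A p \<le> t \<and> t < A i \<longrightarrow> present A D t \<noteq> {})}"
  define p where "p = (LEAST p. p \<in> P)"
  have "i \<in> P" unfolding P_def using assms by auto
  then have "p \<in> P" and least: "\<And>q. q \<in> P \<Longrightarrow> p \<le> q"
    unfolding p_def by (auto intro: LeastI Least_le)
  then have "1 \<le> p" "p \<le> i" and busy_before: "\<And>t. A p \<le> t \<Longrightarrow> t < A i \<Longrightarrow> present A D t \<noteq> {}"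
    unfolding P_def by auto
  have busy: "present A D t \<noteq> {}" if "A p \<le> t" "t < A j" for t
  proof (cases "t < A i")
    case False
    then have "i \<in> present A D t" using assms that unfolding present_def by auto
    then show ?thesis by auto
  qed (use busy_before that in auto)
  have departed: "D l \<le> t" if "1 \<le> l" "l < p" "A p \<le> t" for l t
  proof -
    have "p - 1 \<notin> P" "1 \<le> p - 1" "p - 1 \<le> i"
      using least[of "p - 1"] that \<open>p \<le> i\<close> by auto
    then obtain t0 where t0: "A (p - 1) \<le> t0" "t0 < A i" "present A D t0 = {}"
      unfolding P_def by auto
    then have "t0 < A p" using busy_before[of t0] by fastforce
    moreover have "l \<le> p - 1" using that(2) by simp
    then have "A l \<le> t0" using mono[OF that(1)] t0(1) by fastforce
    then have "D l \<le> t0" using t0 that unfolding present_def by auto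
    ultimately show ?thesis using that by auto
  qed
  have "present A D t \<subseteq> {p..<j}" if "A p \<le> t" "t < A j" for t
  proof
    fix l assume "l \<in> present A D t"
    then have l: "1 \<le> l" "A l \<le> t" "t < D l" unfolding present_def by auto
    then have "A l < A j" using that by linarith
    then have "\<not> j \<le> l" using mono[of j l] \<open>1 \<le> i\<close> \<open>i < j\<close> by fastforce
    moreover have "\<not> l < p" using departed[of l t] l that by auto
    ultimately show "l \<in> {p..<j}" by auto
  qed
  with busy show thesis using that \<open>1 \<le> p\<close> \<open>p \<le> i\<close> by blast
qed

lemma departure_perm_less:
  assumes "a \<in> {1..n}" "b \<in> {1..n}" "D a < D b"
  shows "departure_perm D n a < departure_perm D n b"
proof -
  have "b \<in> {j\<in>{1..n}. D j \<le> D b}" "b \<notin> {j\<in>{1..n}. D j \<le> D a}"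
    "{j\<in>{1..n}. D j \<le> D a} \<subseteq> {j\<in>{1..n}. D j \<le> D b}"
    using assms by auto
  then have "{j\<in>{1..n}. D j \<le> D a} \<subset> {j\<in>{1..n}. D j \<le> D b}"
    by blast
  then show ?thesis unfolding departure_perm_def by (rule psubset_card_mono[rotated]) simp
qed

lemma inversion_imp_busy_period:
  fixes A S D :: "nat \<Rightarrow> real"
  assumes ws: "work_conserving_schedule A S D"
    and mono: "\<And>l m. 1 \<le> l \<Longrightarrow> l \<le> m \<Longrightarrow> A l \<le> A m"
    and "1 \<le> i" "i < j" "j \<le> n" "departure_perm D n j \<le> departure_perm D n i"
  obtains p where "1 \<le> p" "p \<le> i" "A j - A p \<le> (\<Sum>l\<in>{p..<j}. S l)"
proof -
  have "D j \<le> D i"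
  proof (rule ccontr)
    assume "\<not> D j \<le> D i"
    then have "departure_perm D n i < departure_perm D n j"
      using assms(3-5) by (intro departure_perm_less) auto
    then show False using assms(6) by simp
  qed
  moreover have "\<forall>i\<ge>1. A i \<le> D i"
    using ws unfolding work_conserving_schedule_def by blast
  then have "A j \<le> D j"
    using \<open>1 \<le> i\<close> \<open>i < j\<close> by simp
  ultimately have "A j \<le> D i" by linarith
  then obtain p where p: "1 \<le> p" "p \<le> i"
    "\<And>t. A p \<le> t \<Longrightarrow> t < A j \<Longrightarrow> present A D t \<noteq> {} \<and> present A D t \<subseteq> {p..<j}"
    using busy_period_start[where A = A and D = D, OF mono \<open>1 \<le> i\<close> \<open>i < j\<close>] by blast
  moreover have "A j - A p \<le> (\<Sum>l\<in>{p..<j}. S l)"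
  proof (rule busy_interval_le_workload[OF ws])
    show "A p \<le> A j" using mono[of p j] p \<open>i < j\<close> by simp
  qed (use p in auto)
  ultimately show thesis using that by blast
qed

lemma sublinear_deviation_bound:
  fixes U :: "nat \<Rightarrow> real"
  assumes "(\<lambda>n. U n / real n) \<longlonglongrightarrow> a" "\<eta> > 0"
  obtains K where "\<And>n l. l \<le> n \<Longrightarrow> \<bar>U l - a * l\<bar> \<le> \<eta> * real n + K"
proof -
  obtain L where L: "\<And>l. l \<ge> L \<Longrightarrow> \<bar>U l / real l - a\<bar> < \<eta>"
    using LIMSEQ_D[OF assms] by auto
  define K where "K = (\<Sum>l\<le>L. \<bar>U l - a * l\<bar>)"
  have "0 \<le> K" unfolding K_def by (simp add: sum_nonneg)
  have "\<bar>U l - a * l\<bar> \<le> \<eta> * real n + K" if "l \<le> n" for n l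
  proof (cases "l \<le> L")
    case True
    then have "\<bar>U l - a * l\<bar> \<le> K"
      unfolding K_def by (intro member_le_sum) auto
    then show ?thesis using assms(2) by (simp add: add_increasing)
  next
    case False
    then have "U l - a * l = real l * (U l / real l - a)"
      by (simp add: right_diff_distrib)
    then have "\<bar>U l - a * l\<bar> = real l * \<bar>U l / real l - a\<bar>"
      by (simp add: abs_mult)
    also have "\<dots> \<le> real n * \<eta>"
      using L[of l] False that by (intro mult_mono) auto
    finally show ?thesis
      using \<open>0 \<le> K\<close> by (simp add: mult.commute)
  qed
  then show thesis by (rule that)
qed

lemma eventually_increments_less:
  fixes U V :: "nat \<Rightarrow> real"
  assumes U: "(\<lambda>n. U n / real n) \<longlonglongrightarrow> a" and V: "(\<lambda>n. V n / real n) \<longlonglongrightarrow> m"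
    and "m < a" "\<epsilon> > 0"
  shows "\<forall>\<^sub>F n in sequentially. \<forall>p j. 1 \<le> p \<longrightarrow> p < j \<longrightarrow> j \<le> n \<longrightarrow>
    \<epsilon> * real n \<le> real (j - p) \<longrightarrow> V (j - 1) - V (p - 1) < U j - U p"
proof -
  \<comment> \<open>the deviations from the linear trends then cost at most half of the drift \<open>(a - m) \<epsilon> n\<close>\<close>
  define \<eta> where "\<eta> = (a - m) * \<epsilon> / 8"
  have "\<eta> > 0" using assms by (simp add: \<eta>_def)
  obtain K1 where K1: "\<And>n l. l \<le> n \<Longrightarrow> \<bar>U l - a * l\<bar> \<le> \<eta> * real n + K1"
    using sublinear_deviation_bound[OF U \<open>\<eta> > 0\<close>] by blast
  obtain K2 where K2: "\<And>n l. l \<le> n \<Longrightarrow> \<bar>V l - m * l\<bar> \<le> \<eta> * real n + K2"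
    using sublinear_deviation_bound[OF V \<open>\<eta> > 0\<close>] by blast
  have "\<forall>\<^sub>F n in sequentially. 8 * max K1 K2 / ((a - m) * \<epsilon>) < real n"
    by (rule eventually_compose_filterlim[OF eventually_gt_at_top filterlim_real_sequentially])
  then show ?thesis
  proof eventually_elim
    case (elim n)
    then have large: "8 * max K1 K2 < (a - m) * \<epsilon> * real n"
      using assms by (simp add: divide_less_eq mult_ac)
    show ?case
    proof (intro allI impI)
      fix p j assume pj: "1 \<le> p" "p < j" "j \<le> n" and long: "\<epsilon> * real n \<le> real (j - p)"
      have "(a - m) * \<epsilon> * real n \<le> (a - m) * (real j - real p)"
        using long pj assms by (simp add: mult_left_mono of_nat_diff mult.assoc)
      also have "\<dots> = (a * real j - a * real p) - (m * real (j - 1) - m * real (p - 1))"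
        using pj by (simp add: of_nat_diff algebra_simps)
      finally have drift: "(a - m) * \<epsilon> * real n \<le>
          (a * real j - a * real p) - (m * real (j - 1) - m * real (p - 1))" .
      have "p \<le> n" "j - 1 \<le> n" "p - 1 \<le> n" using pj by auto
      note bounds = K1[OF pj(3)] K1[OF this(1)] K2[OF this(2)] K2[OF this(3)]
      have "4 * (\<eta> * real n) = (a - m) * \<epsilon> * real n / 2"
        unfolding \<eta>_def by simp
      then have "4 * (\<eta> * real n) + 2 * K1 + 2 * K2 < (a - m) * \<epsilon> * real n"
        using large max.cobounded1[of K1 K2] max.cobounded2[of K2 K1] by linarith
      then show "V (j - 1) - V (p - 1) < U j - U p"
        using drift bounds unfolding abs_le_iff by linarith
    qed
  qed
qed

lemma inversions_sublinear_departure_perm: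
  fixes A S D :: "nat \<Rightarrow> real"
  assumes ws: "work_conserving_schedule A S D"
    and mono: "\<And>l m. 1 \<le> l \<Longrightarrow> l \<le> m \<Longrightarrow> A l \<le> A m"
    and arrivals: "(\<lambda>n. A n / real n) \<longlonglongrightarrow> a"
    and services: "(\<lambda>n. (\<Sum>k\<in>{1..n}. S k) / real n) \<longlonglongrightarrow> m"
    and "m < a"
  shows "inversions_sublinear (departure_perm D)"
  unfolding inversions_sublinear_def
proof (intro allI impI)
  fix \<epsilon> :: real assume "\<epsilon> > 0"
  define V where "V n = (\<Sum>k\<in>{1..n}. S k)" for n
  from eventually_increments_less[OF arrivals services[folded V_def] \<open>m < a\<close> \<open>\<epsilon> > 0\<close>]
  show "\<forall>\<^sub>F n in sequentially. \<forall>i j. 1 \<le> i \<longrightarrow> i < j \<longrightarrow> j \<le> n \<longrightarrow>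
      departure_perm D n j \<le> departure_perm D n i \<longrightarrow> real (j - i) < \<epsilon> * real n"
  proof eventually_elim
    case (elim n)
    show ?case
    proof (intro allI impI)
      fix i j assume ij: "1 \<le> i" "i < j" "j \<le> n" "departure_perm D n j \<le> departure_perm D n i"
      then obtain p where p: "1 \<le> p" "p \<le> i" "A j - A p \<le> (\<Sum>l\<in>{p..<j}. S l)"
        using inversion_imp_busy_period[where A = A and D = D, OF ws mono] by blast
      have "{1..j - 1} = {1..<j}" "{1..p - 1} = {1..<p}" using p ij by auto
      then have "(\<Sum>l\<in>{p..<j}. S l) = V (j - 1) - V (p - 1)"
        using sum_diff_nat_ivl[of 1 p j S] p ij unfolding V_def by simp
      show "real (j - i) < \<epsilon> * real n"
      proof (rule ccontr)
        assume "\<not> real (j - i) < \<epsilon> * real n"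
        moreover have "real (j - i) \<le> real (j - p)" using p by simp
        ultimately have "V (j - 1) - V (p - 1) < A j - A p"
          using elim p ij by simp
        with p(3) \<open>(\<Sum>l\<in>{p..<j}. S l) = V (j - 1) - V (p - 1)\<close> show False by linarith
      qed
    qed
  qed
qed

section \<open>A strong law of large numbers\<close>

lemma average_between_squares:
  fixes T :: "nat \<Rightarrow> real"
  assumes mono: "mono T" and nonneg: "\<And>n. 0 \<le> T n" and "1 \<le> n"
  shows "T (floor_sqrt n ^ 2) / real (Suc (floor_sqrt n)) ^ 2 \<le> T n / real n"
    and "T n / real n \<le> T (Suc (floor_sqrt n) ^ 2) / real (floor_sqrt n) ^ 2"
proof -
  let ?r = "floor_sqrt n"
  have "?r ^ 2 \<le> n" "n \<le> Suc ?r ^ 2" "1 \<le> ?r"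
    using Suc_floor_sqrt_power2_gt[of n] le_floor_sqrtI[of 1 n] \<open>1 \<le> n\<close> by auto
  then have le: "real ?r ^ 2 \<le> real n" "real n \<le> real (Suc ?r) ^ 2"
    by (metis of_nat_le_iff of_nat_power)+
  have pos: "0 < real ?r ^ 2" "0 < real n"
    and T_le: "T (?r ^ 2) \<le> T n" "T n \<le> T (Suc ?r ^ 2)"
    using \<open>?r ^ 2 \<le> n\<close> \<open>n \<le> Suc ?r ^ 2\<close> \<open>1 \<le> ?r\<close> \<open>1 \<le> n\<close>
    by (auto intro: monoD[OF mono])
  show "T (?r ^ 2) / real (Suc ?r) ^ 2 \<le> T n / real n"
    using frac_le[OF nonneg T_le(1) pos(2) le(2)] .
  show "T n / real n \<le> T (Suc ?r ^ 2) / real ?r ^ 2"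
    using frac_le[OF nonneg T_le(2) pos(1) le(1)] .
qed

lemma tendsto_average_of_mono_squares:
  fixes T :: "nat \<Rightarrow> real"
  assumes mono: "mono T" and nonneg: "\<And>n. 0 \<le> T n"
    and squares: "(\<lambda>k. T (k ^ 2) / real (k ^ 2)) \<longlonglongrightarrow> m"
  shows "(\<lambda>n. T n / real n) \<longlonglongrightarrow> m"
proof (rule tendsto_sandwich)
  let ?r = floor_sqrt
  have r: "filterlim ?r at_top sequentially"
    unfolding filterlim_at_top eventually_sequentially
    by (metis le_floor_sqrtI power2_nat_le_imp_le order_refl)
  have r_pos: "\<forall>\<^sub>F n in sequentially. 0 < ?r n"
    using eventually_ge_at_top[of 1] by eventually_elim (simp add: le_floor_sqrtI Suc_le_eq)
  have "(\<lambda>k. T (k ^ 2) / real (k ^ 2) * (real k / real (Suc k)) ^ 2) \<longlonglongrightarrow> m * 1 ^ 2"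
    by (intro tendsto_intros squares LIMSEQ_n_over_Suc_n)
  then have "(\<lambda>n. T (?r n ^ 2) / real (?r n ^ 2) * (real (?r n) / real (Suc (?r n))) ^ 2) \<longlonglongrightarrow> m"
    using filterlim_compose[OF _ r] by simp
  then show "(\<lambda>n. T (?r n ^ 2) / real (Suc (?r n)) ^ 2) \<longlonglongrightarrow> m"
    by (rule Lim_transform_eventually) (use r_pos in \<open>eventually_elim, simp add: power_divide\<close>)
  have "(\<lambda>k. T (Suc k ^ 2) / real (Suc k ^ 2) * (real (Suc k) / real k) ^ 2) \<longlonglongrightarrow> m * 1 ^ 2"
    by (intro tendsto_intros LIMSEQ_Suc[OF squares] LIMSEQ_Suc_n_over_n)
  then have "(\<lambda>n. T (Suc (?r n) ^ 2) / real (Suc (?r n) ^ 2) * (real (Suc (?r n)) / real (?r n)) ^ 2)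
      \<longlonglongrightarrow> m"
    using filterlim_compose[OF _ r] by simp
  then show "(\<lambda>n. T (Suc (?r n) ^ 2) / real (?r n) ^ 2) \<longlonglongrightarrow> m"
    by (rule Lim_transform_eventually) (use r_pos in \<open>eventually_elim, simp add: power_divide\<close>)
  show "\<forall>\<^sub>F n in sequentially. T (?r n ^ 2) / real (Suc (?r n)) ^ 2 \<le> T n / real n"
    using eventually_ge_at_top[of 1]
    by eventually_elim (rule average_between_squares(1)[OF mono nonneg])
  show "\<forall>\<^sub>F n in sequentially. T n / real n \<le> T (Suc (?r n) ^ 2) / real (?r n) ^ 2"
    using eventually_ge_at_top[of 1]
    by eventually_elim (rule average_between_squares(2)[OF mono nonneg])
qed

context prob_space
begin

lemma indep_vars_imp_indep_var:
  fixes X :: "'i \<Rightarrow> 'a \<Rightarrow> real"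
  assumes "indep_vars (\<lambda>_. borel) X I" "i \<in> I" "j \<in> I" "i \<noteq> j"
  shows "indep_var borel (X i) borel (X j)"
  using indep_vars_sum[of "{j}" i X] indep_vars_subset[OF assms(1)] assms(2-4) by simp

lemma variance_sum_pairwise_indep:
  fixes Y :: "'i \<Rightarrow> 'a \<Rightarrow> real" and m s :: real
  assumes "finite I"
    and meas: "\<And>i. i \<in> I \<Longrightarrow> Y i \<in> borel_measurable M"
    and sq: "\<And>i. i \<in> I \<Longrightarrow> integrable M (\<lambda>\<omega>. Y i \<omega> ^ 2)"
    and mean: "\<And>i. i \<in> I \<Longrightarrow> expectation (Y i) = m"
    and moment2: "\<And>i. i \<in> I \<Longrightarrow> expectation (\<lambda>\<omega>. Y i \<omega> ^ 2) = s"
    and indep: "\<And>i j. i \<in> I \<Longrightarrow> j \<in> I \<Longrightarrow> i \<noteq> j \<Longrightarrow> indep_var borel (Y i) borel (Y j)"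
  shows "integrable M (\<lambda>\<omega>. (\<Sum>i\<in>I. Y i \<omega>) ^ 2)"
    and "expectation (\<lambda>\<omega>. \<Sum>i\<in>I. Y i \<omega>) = card I * m"
    and "variance (\<lambda>\<omega>. \<Sum>i\<in>I. Y i \<omega>) = card I * (s - m\<^sup>2)"
proof -
  have int: "integrable M (Y i)" if "i \<in> I" for i
    using square_integrable_imp_integrable[OF meas[OF that] sq[OF that]] .
  have prod: "integrable M (\<lambda>\<omega>. Y i \<omega> * Y j \<omega>) \<and>
      expectation (\<lambda>\<omega>. Y i \<omega> * Y j \<omega>) = m * m + (if i = j then s - m * m else 0)"
    if "i \<in> I" "j \<in> I" for i j
    using that sq moment2 int mean indep_var_integrable[OF indep] indep_var_lebesgue_integral[OF indep]
    by (auto simp: power2_eq_square)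
  have square: "(\<Sum>i\<in>I. Y i \<omega>) ^ 2 = (\<Sum>i\<in>I. \<Sum>j\<in>I. Y i \<omega> * Y j \<omega>)" for \<omega>
    unfolding power2_eq_square by (rule sum_product)
  show int_sq: "integrable M (\<lambda>\<omega>. (\<Sum>i\<in>I. Y i \<omega>) ^ 2)"
    unfolding square using prod by auto
  show mean_sum: "expectation (\<lambda>\<omega>. \<Sum>i\<in>I. Y i \<omega>) = card I * m"
    using int mean by (simp add: Bochner_Integration.integral_sum)
  have "expectation (\<lambda>\<omega>. (\<Sum>i\<in>I. Y i \<omega>) ^ 2) = card I * (card I * (m * m) + (s - m * m))"
    unfolding square using prod \<open>finite I\<close> by (simp add: Bochner_Integration.integral_sum sum.distrib)
  then show "variance (\<lambda>\<omega>. \<Sum>i\<in>I. Y i \<omega>) = card I * (s - m\<^sup>2)"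
    using variance_eq[OF _ int_sq] int mean_sum by (simp add: algebra_simps power2_eq_square)
qed

lemma prob_average_deviation_le:
  fixes Y :: "nat \<Rightarrow> 'a \<Rightarrow> real" and m s :: real
  assumes meas: "\<And>i. 1 \<le> i \<Longrightarrow> Y i \<in> borel_measurable M"
    and sq: "\<And>i. 1 \<le> i \<Longrightarrow> integrable M (\<lambda>\<omega>. Y i \<omega> ^ 2)"
    and mean: "\<And>i. 1 \<le> i \<Longrightarrow> expectation (Y i) = m"
    and moment2: "\<And>i. 1 \<le> i \<Longrightarrow> expectation (\<lambda>\<omega>. Y i \<omega> ^ 2) = s"
    and indep: "\<And>i j. 1 \<le> i \<Longrightarrow> 1 \<le> j \<Longrightarrow> i \<noteq> j \<Longrightarrow> indep_var borel (Y i) borel (Y j)"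
    and "0 < \<eta>" "1 \<le> n"
  shows "prob {\<omega> \<in> space M. \<eta> \<le> \<bar>(\<Sum>i\<in>{1..n}. Y i \<omega>) / real n - m\<bar>} \<le> (s - m\<^sup>2) / \<eta>\<^sup>2 / real n"
proof -
  let ?T = "\<lambda>\<omega>. \<Sum>i\<in>{1..n}. Y i \<omega>"
  have hyps: "Y i \<in> borel_measurable M" "integrable M (\<lambda>\<omega>. Y i \<omega> ^ 2)"
    "expectation (Y i) = m" "expectation (\<lambda>\<omega>. Y i \<omega> ^ 2) = s" if "i \<in> {1..n}" for i
    using that meas sq mean moment2 by auto
  have pairs: "indep_var borel (Y i) borel (Y j)" if "i \<in> {1..n}" "j \<in> {1..n}" "i \<noteq> j" for i j
    using that indep by auto
  have "integrable M (\<lambda>\<omega>. (?T \<omega>)\<^sup>2)" "expectation ?T = real (card {1..n}) * m"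
    "variance ?T = real (card {1..n}) * (s - m\<^sup>2)"
    using variance_sum_pairwise_indep[of "{1..n}" Y m s] hyps pairs by blast+
  note moments = this[unfolded card_atLeastAtMost diff_Suc_1]
  have pos: "0 < real n" using \<open>1 \<le> n\<close> by simp
  have "{\<omega> \<in> space M. \<eta> \<le> \<bar>?T \<omega> / real n - m\<bar>} =
      {\<omega> \<in> space M. \<eta> * real n \<le> \<bar>?T \<omega> - expectation ?T\<bar>}"
    using moments(2) pos by (auto simp: divide_simps abs_divide mult.commute simp flip: abs_mult)
  then have "prob {\<omega> \<in> space M. \<eta> \<le> \<bar>?T \<omega> / real n - m\<bar>} \<le> variance ?T / (\<eta> * real n)\<^sup>2"
    using moments(1) meas \<open>\<eta> > 0\<close> pos by (simp only:) (intro Chebyshev_inequality; auto)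
  also have "\<dots> = real n * (s - m\<^sup>2) / (\<eta> * real n)\<^sup>2"
    unfolding moments(3) ..
  also have "\<dots> = (s - m\<^sup>2) / \<eta>\<^sup>2 / real n"
    using pos \<open>\<eta> > 0\<close> by (simp add: power2_eq_square field_simps)
  finally show ?thesis .
qed

lemma AE_tendsto_average_along_squares:
  fixes Y :: "nat \<Rightarrow> 'a \<Rightarrow> real" and m s :: real
  assumes meas: "\<And>i. 1 \<le> i \<Longrightarrow> Y i \<in> borel_measurable M"
    and sq: "\<And>i. 1 \<le> i \<Longrightarrow> integrable M (\<lambda>\<omega>. Y i \<omega> ^ 2)"
    and mean: "\<And>i. 1 \<le> i \<Longrightarrow> expectation (Y i) = m"
    and moment2: "\<And>i. 1 \<le> i \<Longrightarrow> expectation (\<lambda>\<omega>. Y i \<omega> ^ 2) = s"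
    and indep: "\<And>i j. 1 \<le> i \<Longrightarrow> 1 \<le> j \<Longrightarrow> i \<noteq> j \<Longrightarrow> indep_var borel (Y i) borel (Y j)"
  shows "AE \<omega> in M. (\<lambda>k. (\<Sum>i\<in>{1..k\<^sup>2}. Y i \<omega>) / real (k\<^sup>2)) \<longlonglongrightarrow> m"
proof -
  define avg where "avg k \<omega> = (\<Sum>i\<in>{1..k\<^sup>2}. Y i \<omega>) / real (k\<^sup>2)" for k \<omega>
  define B where "B \<eta> k = {\<omega> \<in> space M. \<eta> \<le> \<bar>avg k \<omega> - m\<bar>}" for \<eta> k
  have "avg k \<in> borel_measurable M" for k
    unfolding avg_def using meas by (intro borel_measurable_divide borel_measurable_sum) auto
  then have B_sets: "B \<eta> k \<in> sets M" for \<eta> k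
    unfolding B_def by (intro borel_measurable_le borel_measurable_abs borel_measurable_diff) auto
  have rare: "AE \<omega> in M. \<forall>\<^sub>F k in sequentially. \<omega> \<in> space M - B \<eta> k" if "\<eta> > 0" for \<eta>
  proof (rule borel_cantelli_AE1[OF B_sets])
    show "emeasure M (B \<eta> k) < \<infinity>" for k
      by (simp add: less_top[symmetric])
    have deviation: "prob {\<omega> \<in> space M. \<eta> \<le> \<bar>(\<Sum>i\<in>{1..n}. Y i \<omega>) / real n - m\<bar>}
        \<le> (s - m\<^sup>2) / \<eta>\<^sup>2 / real n" if "1 \<le> n" for n
      by (rule prob_average_deviation_le) (fact meas sq mean moment2 indep \<open>\<eta> > 0\<close> that)+
    show "summable (\<lambda>k. measure M (B \<eta> k))"
    proof (rule summable_comparison_test')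
      show "summable (\<lambda>k. (s - m\<^sup>2) / \<eta>\<^sup>2 * inverse (real k ^ 2))"
        by (intro summable_mult inverse_power_summable) simp
      show "norm (measure M (B \<eta> k)) \<le> (s - m\<^sup>2) / \<eta>\<^sup>2 * inverse (real k ^ 2)" if "1 \<le> k" for k
        using deviation[of "k\<^sup>2"] that
        by (simp add: B_def avg_def divide_inverse)
    qed
  qed
  have "AE \<omega> in M. \<forall>q. \<forall>\<^sub>F k in sequentially. \<omega> \<in> space M - B (1 / Suc q) k"
    unfolding AE_all_countable by (intro allI rare) simp
  then show ?thesis
  proof eventually_elim
    case (elim \<omega>)
    show ?case
      unfolding avg_def[symmetric]
    proof (rule tendsto_iff[THEN iffD2], intro allI impI)
      fix e :: real assume "e > 0"
      then obtain q where "1 / Suc q < e"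
        by (rule nat_approx_posE)
      from elim[rule_format, of q] show "\<forall>\<^sub>F k in sequentially. dist (avg k \<omega>) m < e"
        by eventually_elim (use \<open>1 / Suc q < e\<close> in \<open>auto simp: B_def dist_real_def\<close>)
    qed
  qed
qed

lemma strong_law_nonneg_pairwise_indep:
  fixes Y :: "nat \<Rightarrow> 'a \<Rightarrow> real" and m s :: real
  assumes meas: "\<And>i. 1 \<le> i \<Longrightarrow> Y i \<in> borel_measurable M"
    and nonneg: "\<And>i. 1 \<le> i \<Longrightarrow> AE \<omega> in M. 0 \<le> Y i \<omega>"
    and sq: "\<And>i. 1 \<le> i \<Longrightarrow> integrable M (\<lambda>\<omega>. Y i \<omega> ^ 2)"
    and mean: "\<And>i. 1 \<le> i \<Longrightarrow> expectation (Y i) = m"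
    and moment2: "\<And>i. 1 \<le> i \<Longrightarrow> expectation (\<lambda>\<omega>. Y i \<omega> ^ 2) = s"
    and indep: "\<And>i j. 1 \<le> i \<Longrightarrow> 1 \<le> j \<Longrightarrow> i \<noteq> j \<Longrightarrow> indep_var borel (Y i) borel (Y j)"
  shows "AE \<omega> in M. (\<lambda>n. (\<Sum>i\<in>{1..n}. Y i \<omega>) / real n) \<longlonglongrightarrow> m"
proof -
  have "AE \<omega> in M. \<forall>i. 1 \<le> i \<longrightarrow> 0 \<le> Y i \<omega>"
    unfolding AE_all_countable using nonneg by (intro allI AE_impI) auto
  moreover have "AE \<omega> in M. (\<lambda>k. (\<Sum>i\<in>{1..k\<^sup>2}. Y i \<omega>) / real (k\<^sup>2)) \<longlonglongrightarrow> m"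
    by (rule AE_tendsto_average_along_squares) (fact meas sq mean moment2 indep)+
  ultimately show ?thesis
  proof eventually_elim
    case (elim \<omega>)
    show ?case
    proof (rule tendsto_average_of_mono_squares[OF _ _ elim(2)])
      show "mono (\<lambda>n. \<Sum>i\<in>{1..n}. Y i \<omega>)"
        using elim(1) by (intro monoI sum_mono2) auto
      show "0 \<le> (\<Sum>i\<in>{1..n}. Y i \<omega>)" for n
        using elim(1) by (intro sum_nonneg) auto
    qed
  qed
qed

lemma strong_law_identically_distributed:
  fixes Y :: "nat \<Rightarrow> 'a \<Rightarrow> real"
  assumes meas: "\<And>i. 1 \<le> i \<Longrightarrow> Y i \<in> borel_measurable M"
    and distr: "\<And>i. 1 \<le> i \<Longrightarrow> distr M borel (Y i) = distr M borel (Y 1)"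
    and indep: "\<And>i j. 1 \<le> i \<Longrightarrow> 1 \<le> j \<Longrightarrow> i \<noteq> j \<Longrightarrow> indep_var borel (Y i) borel (Y j)"
    and nonneg: "AE \<omega> in M. 0 \<le> Y 1 \<omega>"
    and sq: "integrable M (\<lambda>\<omega>. Y 1 \<omega> ^ 2)"
  shows "AE \<omega> in M. (\<lambda>n. (\<Sum>i\<in>{1..n}. Y i \<omega>) / real n) \<longlonglongrightarrow> expectation (Y 1)"
proof (rule strong_law_nonneg_pairwise_indep[OF meas _ _ _ _ indep])
  fix i :: nat assume "1 \<le> i"
  have Yi: "Y i \<in> borel_measurable M" and Y1: "Y 1 \<in> borel_measurable M"
    using meas \<open>1 \<le> i\<close> by auto
  note same = distr[OF \<open>1 \<le> i\<close>]
  have same_integrable: "integrable M (\<lambda>\<omega>. f (Y i \<omega>)) \<longleftrightarrow> integrable M (\<lambda>\<omega>. f (Y 1 \<omega>))"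
    and same_integral: "expectation (\<lambda>\<omega>. f (Y i \<omega>)) = expectation (\<lambda>\<omega>. f (Y 1 \<omega>))"
    if f: "f \<in> borel_measurable borel" for f :: "real \<Rightarrow> real"
    using integrable_distr_eq[OF Yi f] integrable_distr_eq[OF Y1 f]
      integral_distr[OF Yi f] integral_distr[OF Y1 f] same by simp_all
  have pred: "{x \<in> space borel. (0::real) \<le> x} \<in> sets borel" by measurable
  have "AE x in distr M borel (Y 1). 0 \<le> x"
    using AE_distr_iff[OF Y1 pred] nonneg by simp
  then show "AE \<omega> in M. 0 \<le> Y i \<omega>"
    using AE_distr_iff[OF Yi pred] unfolding same by simp
  show "integrable M (\<lambda>\<omega>. Y i \<omega> ^ 2)"
    using sq same_integrable[of "\<lambda>x. x ^ 2"] by simp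
  show "expectation (Y i) = expectation (Y 1)"
    using same_integral[of "\<lambda>x. x"] by simp
  show "expectation (\<lambda>\<omega>. Y i \<omega> ^ 2) = expectation (\<lambda>\<omega>. Y 1 \<omega> ^ 2)"
    using same_integral[of "\<lambda>x. x ^ 2"] by simp
qed

lemma AE_exponential_nonneg:
  assumes "distributed M lborel Y (exponential_density l)"
  shows "AE \<omega> in M. 0 \<le> Y \<omega>"
proof -
  have "AE x in lborel. 0 < exponential_density l x \<longrightarrow> 0 \<le> x"
    by (intro AE_I2) (simp add: exponential_density_def)
  then show ?thesis
    using distributed_AE2[OF assms, of "\<lambda>x. 0 \<le> x"] by simp
qed

lemma strong_law_exponential:
  fixes Y :: "nat \<Rightarrow> 'a \<Rightarrow> real"
  assumes "0 < l"
    and exp: "\<And>i. 1 \<le> i \<Longrightarrow> distributed M lborel (Y i) (exponential_density l)"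
    and indep: "\<And>i j. 1 \<le> i \<Longrightarrow> 1 \<le> j \<Longrightarrow> i \<noteq> j \<Longrightarrow> indep_var borel (Y i) borel (Y j)"
  shows "AE \<omega> in M. (\<lambda>n. (\<Sum>i\<in>{1..n}. Y i \<omega>) / real n) \<longlonglongrightarrow> 1 / l"
proof -
  have "distr M borel (Y i) = density lborel (exponential_density l)" if "1 \<le> i" for i
  proof -
    have "distr M borel (Y i) = distr M lborel (Y i)"
      by (rule distr_cong) simp_all
    then show ?thesis using distributed_distr_eq_density[OF exp[OF that]] by simp
  qed
  moreover have "Y i \<in> borel_measurable M" if "1 \<le> i" for i
    using distributed_measurable[OF exp[OF that]] by simp
  ultimately have "AE \<omega> in M. (\<lambda>n. (\<Sum>i\<in>{1..n}. Y i \<omega>) / real n) \<longlonglongrightarrow> expectation (Y 1)"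
    using exp erlang_ith_moment_integrable[OF \<open>0 < l\<close> exp, of 1 2]
    by (intro strong_law_identically_distributed indep AE_exponential_nonneg) auto
  then show ?thesis
    using exponential_distributed_expectation[OF \<open>0 < l\<close> exp[of 1]] by simp
qed

end

lemma integrable_power2_of_power3:
  fixes f :: "'a \<Rightarrow> real"
  assumes "integrable M f" "integrable M (\<lambda>x. f x ^ 3)"
  shows "integrable M (\<lambda>x. f x ^ 2)"
proof (rule Bochner_Integration.integrable_bound)
  show "integrable M (\<lambda>x. \<bar>f x\<bar> + \<bar>f x ^ 3\<bar>)"
    using assms by (intro Bochner_Integration.integrable_add integrable_abs)
  show "(\<lambda>x. f x ^ 2) \<in> borel_measurable M"
    using borel_measurable_integrable[OF assms(1)] by measurable
  have "\<bar>y\<bar>\<^sup>2 \<le> \<bar>y\<bar> + \<bar>y\<bar> ^ 3" for y :: real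
  proof (cases "\<bar>y\<bar> \<le> 1")
    case True
    then have "\<bar>y\<bar>\<^sup>2 \<le> \<bar>y\<bar>"
      unfolding power2_eq_square by (intro mult_left_le_one_le) auto
    then show ?thesis by (intro add_increasing2) auto
  next
    case False
    then have "\<bar>y\<bar>\<^sup>2 \<le> \<bar>y\<bar> ^ 3"
      by (intro power_increasing) auto
    then show ?thesis by simp
  qed
  then show "AE x in M. norm (f x ^ 2) \<le> norm (\<bar>f x\<bar> + \<bar>f x ^ 3\<bar>)"
    by (simp add: power_abs)
qed

section \<open>Departure order of the M/G/1 queue\<close>

theorem proposition2:
  fixes M :: "'a measure"
    and X :: "nat \<Rightarrow> 'a \<Rightarrow> real"
    and S :: "nat \<Rightarrow> 'a \<Rightarrow> real"
    and D :: "nat \<Rightarrow> 'a \<Rightarrow> real"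
    and lam \<mu> :: real
  assumes "prob_space M"
    and "lam > 0"
    and "\<And>i. i \<ge> 1 \<Longrightarrow> distributed M lborel (X i) (exponential_density lam)"
    and "\<And>i. i \<ge> 1 \<Longrightarrow> S i \<in> borel_measurable M"
    and "\<And>i. i \<ge> 1 \<Longrightarrow> distr M borel (S i) = distr M borel (S 1)"
    and "prob_space.indep_vars M (\<lambda>_. borel)
           (\<lambda>k. case k of Inl i \<Rightarrow> X i | Inr i \<Rightarrow> S i)
           (Inl ` {1..} \<union> Inr ` {1..})"
    and "AE \<omega> in M. S 1 \<omega> \<ge> 0"
    and "integrable M (S 1)"
    and "\<mu> = prob_space.expectation M (S 1)"
    and "integrable M (\<lambda>\<omega>. S 1 \<omega> ^ 3)"
    and "lam * \<mu> < 1"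
    and "AE \<omega> in M. work_conserving_schedule
                       (\<lambda>i. \<Sum>k\<in>{1..i}. X k \<omega>) (\<lambda>i. S i \<omega>) (\<lambda>i. D i \<omega>)"
  shows "AE \<omega> in M. \<forall>k \<sigma>. \<sigma> permutes {1..k} \<longrightarrow>
           (\<lambda>n. pattern_freq k \<sigma> n (departure_perm (\<lambda>i. D i \<omega>) n))
             \<longlonglongrightarrow> pattern_freq_Cinf k \<sigma>"
proof -
  interpret prob_space M by fact
  have X_pairwise: "indep_var borel (X i) borel (X j)"
    and S_pairwise: "indep_var borel (S i) borel (S j)" if "1 \<le> i" "1 \<le> j" "i \<noteq> j" for i j
    using that indep_vars_imp_indep_var[OF assms(6), of "Inl i" "Inl j"]
      indep_vars_imp_indep_var[OF assms(6), of "Inr i" "Inr j"] by auto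
  have "\<mu> < 1 / lam"
    using assms(2,11) by (simp add: field_simps)
  have arrivals: "AE \<omega> in M. (\<lambda>n. (\<Sum>i\<in>{1..n}. X i \<omega>) / real n) \<longlonglongrightarrow> 1 / lam"
    by (rule strong_law_exponential) (fact assms(2,3) X_pairwise)+
  \<comment> \<open>of the third moment of the service times only the finite variance it implies is used\<close>
  have services: "AE \<omega> in M. (\<lambda>n. (\<Sum>i\<in>{1..n}. S i \<omega>) / real n) \<longlonglongrightarrow> \<mu>"
    unfolding assms(9)
    by (rule strong_law_identically_distributed)
      (fact assms(4,5,7) S_pairwise integrable_power2_of_power3[OF assms(8,10)])+
  have "AE \<omega> in M. \<forall>i. 1 \<le> i \<longrightarrow> 0 \<le> X i \<omega>"
    unfolding AE_all_countable using assms(3) by (auto intro: AE_impI AE_exponential_nonneg)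
  with assms(12) arrivals services show ?thesis
  proof eventually_elim
    case (elim \<omega>)
    have "inversions_sublinear (departure_perm (\<lambda>i. D i \<omega>))"
      using elim(4) by (intro inversions_sublinear_departure_perm[OF elim(1) _ elim(2,3)
          \<open>\<mu> < 1 / lam\<close>] sum_mono2) auto
    then show ?case
      using pattern_freq_tendsto_Cinf by blast
  qed
qed

end
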